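(* For every message $M$ and formula $\phi$: $\vdash[M][M]\phi\leftrightarrow[M]\phi$.
   Context: Fix a finite set $\mathcal{A}$ of agent names containing a distinguished name $\mathsf{CM}$. Messages: $M ::= a \mid B \mid (M,M)$ ($a\in\mathcal{A}$, $B$ optional data constants, pairs). $\mathcal{P}$ is a denumerable set of propositional variables containing atoms $\mathsf{k}_a(M)$ ("$a$ knows $M$"). Formulas: $\phi ::= P \mid \phi\wedge\phi \mid \phi\vee\phi \mid \neg\phi \mid \phi\to\phi \mid [M]\phi$. Abbreviations: $\mathrm{true}:=\mathsf{k}_{\mathsf{CM}}(\mathsf{CM})$, $\mathrm{false}:=\neg\mathrm{true}$, $\phi\leftrightarrow\psi:=(\phi\to\psi)\wedge(\psi\to\phi)$, $\langle M\rangle\phi:=\neg\neg(\mathsf{k}_{\mathsf{CM}}(M)\wedge\phi)$. LIiP is the smallest set of formulas containing all instances of: the axioms of an adequate Hilbert axiomatization of intuitionistic propositional logic; $\mathsf{k}_a(a)$; $(\mathsf{k}_a(M)\wedge\mathsf{k}_a(M'))\leftrightarrow\mathsf{k}_a((M,M'))$; $[M]\mathsf{k}_{\mathsf{CM}}(M)$; $[M](\phi\to\psi)\to([M]\phi\to[M]\psi)$; $[M]\phi\to(\mathsf{k}_{\mathsf{CM}}(M)\to\phi)$; $[M]\phi\to\langle M\rangle\phi$; $\phi\to[M]\phi$; and closed under modus ponens and the rule: if $\mathsf{k}_{\mathsf{CM}}(M)\to\mathsf{k}_{\mathsf{CM}}(M')$ is in the set then so is $[M']\phi\to[M]\phi$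 for every $\phi$. Write $\vdash\phi$ for $\phi\in\mathrm{LIiP}$. *)

theory Defs
  imports Main
begin

datatype ('a, 'b) msg = Ag 'a | Dat 'b | Pair "('a, 'b) msg" "('a, 'b) msg"

text \<open>Propositional variables: the atoms k_a(M), plus further variables of type 'v.\<close>
datatype ('a, 'b, 'v) pvar = Kn 'a "('a, 'b) msg" | Var 'v

datatype ('a, 'b, 'v) form =
    PV "('a, 'b, 'v) pvar"
  | Conj "('a, 'b, 'v) form" "('a, 'b, 'v) form"
  | Disj "('a, 'b, 'v) form" "('a, 'b, 'v) form"
  | Neg "('a, 'b, 'v) form"
  | Imp "('a, 'b, 'v) form" "('a, 'b, 'v) form"
  | Box "('a, 'b) msg" "('a, 'b, 'v) form"

definition K :: "'a \<Rightarrow> ('a, 'b) msg \<Rightarrow> ('a, 'b, 'v) form" where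
  "K a M = PV (Kn a M)"

definition TT :: "'a \<Rightarrow> ('a, 'b, 'v) form" where
  "TT cm = K cm (Ag cm)"

definition FF :: "'a \<Rightarrow> ('a, 'b, 'v) form" where
  "FF cm = Neg (TT cm)"

definition Iff :: "('a, 'b, 'v) form \<Rightarrow> ('a, 'b, 'v) form \<Rightarrow> ('a, 'b, 'v) form" where
  "Iff p q = Conj (Imp p q) (Imp q p)"

definition Dia :: "'a \<Rightarrow> ('a, 'b) msg \<Rightarrow> ('a, 'b, 'v) form \<Rightarrow> ('a, 'b, 'v) form" where
  "Dia cm M p = Neg (Neg (Conj (K cm M) p))"

text \<open>LIiP with distinguished agent cm. Intuitionistic propositional part: Kleene's
  Hilbert axiomatization (with primitive negation).\<close>
inductive LIiP :: "'a \<Rightarrow> ('a, 'b, 'v) form \<Rightarrow> bool" for cm :: 'a where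
  ax_K: "LIiP cm (Imp p (Imp q p))"
| ax_S: "LIiP cm (Imp (Imp p (Imp q r)) (Imp (Imp p q) (Imp p r)))"
| ax_conjI: "LIiP cm (Imp p (Imp q (Conj p q)))"
| ax_conjE1: "LIiP cm (Imp (Conj p q) p)"
| ax_conjE2: "LIiP cm (Imp (Conj p q) q)"
| ax_disjI1: "LIiP cm (Imp p (Disj p q))"
| ax_disjI2: "LIiP cm (Imp q (Disj p q))"
| ax_disjE: "LIiP cm (Imp (Imp p r) (Imp (Imp q r) (Imp (Disj p q) r)))"
| ax_negI: "LIiP cm (Imp (Imp p q) (Imp (Imp p (Neg q)) (Neg p)))"
| ax_negE: "LIiP cm (Imp (Neg p) (Imp p q))"
| ax_self: "LIiP cm (K a (Ag a))"
| ax_pair: "LIiP cm (Iff (Conj (K a M) (K a M')) (K a (Pair M M')))"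
| ax_boxK: "LIiP cm (Box M (K cm M))"
| ax_distr: "LIiP cm (Imp (Box M (Imp p q)) (Imp (Box M p) (Box M q)))"
| ax_boxT: "LIiP cm (Imp (Box M p) (Imp (K cm M) p))"
| ax_boxD: "LIiP cm (Imp (Box M p) (Dia cm M p))"
| ax_unit: "LIiP cm (Imp p (Box M p))"
| mp: "LIiP cm (Imp p q) \<Longrightarrow> LIiP cm p \<Longrightarrow> LIiP cm q"
| mono: "LIiP cm (Imp (K cm M) (K cm M')) \<Longrightarrow> LIiP cm (Imp (Box M' p) (Box M p))"

end

theory Submission
  imports Defs
begin

text \<open>The direction from \<open>[M]\<phi>\<close> to \<open>[M][M]\<phi>\<close> is an instance of the unit axiom.
  Conversely, necessitating \<open>[M]\<phi> \<rightarrow> (k(M) \<rightarrow> \<phi>)\<close> and distributing turns \<open>[M][M]\<phi>\<close>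
  into \<open>[M](k(M) \<rightarrow> \<phi>)\<close>, and the premise \<open>k(M)\<close> holds under \<open>[M]\<close> by axiom.\<close>

lemma LIiP_imp_trans:
  "LIiP cm (Imp p q) \<Longrightarrow> LIiP cm (Imp q r) \<Longrightarrow> LIiP cm (Imp p r)"
  by (meson LIiP.ax_K LIiP.ax_S LIiP.mp)

lemma LIiP_imp_discharge:
  "LIiP cm (Imp p (Imp q r)) \<Longrightarrow> LIiP cm q \<Longrightarrow> LIiP cm (Imp p r)"
  by (meson LIiP.ax_K LIiP.ax_S LIiP.mp)

lemma LIiP_IffI:
  "LIiP cm (Imp p q) \<Longrightarrow> LIiP cm (Imp q p) \<Longrightarrow> LIiP cm (Iff p q)"
  unfolding Iff_def by (meson LIiP.ax_conjI LIiP.mp)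

lemma LIiP_nec: "LIiP cm p \<Longrightarrow> LIiP cm (Box M p)"
  by (meson LIiP.ax_unit LIiP.mp)

lemma LIiP_Box_Box_imp_Box: "LIiP cm (Imp (Box M (Box M p)) (Box M p))"
proof -
  have "LIiP cm (Box M (Imp (Box M p) (Imp (K cm M) p)))"
    by (rule LIiP_nec[OF LIiP.ax_boxT])
  then have "LIiP cm (Imp (Box M (Box M p)) (Box M (Imp (K cm M) p)))"
    by (rule LIiP.mp[OF LIiP.ax_distr])
  moreover have "LIiP cm (Imp (Box M (Imp (K cm M) p)) (Box M p))"
    by (rule LIiP_imp_discharge[OF LIiP.ax_distr LIiP.ax_boxK])
  ultimately show ?thesis
    by (rule LIiP_imp_trans)
qed

theorem theorem2p36:
  fixes cm :: "'a::finite" and M :: "('a, 'b) msg" and \<phi> :: "('a, 'b, 'v) form"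
  shows "LIiP cm (Iff (Box M (Box M \<phi>)) (Box M \<phi>))"
  by (rule LIiP_IffI[OF LIiP_Box_Box_imp_Box LIiP.ax_unit])

end
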